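(* Let $x\in\operatorname{Int}C$ and let $\beta:\mathbb{R}^{n_x}\to\mathbb{R}$ be a bounded measurable function with $\beta(y)=0$ for $y\notin C$. Then the limit $A^\pi\beta(x)=\lim_{t\searrow0}\frac{T_t^\pi\beta(x)-\beta(x)}{t}$ exists if and only if the limit $\mathcal{A}^\pi\beta(x)=\lim_{\tau\searrow0}\frac{\mathbb{E}^\pi[\beta(X_\tau)\mid X_0=x]-\beta(x)}{\tau}$ exists, and in that case $A^\pi\beta(x)=\mathcal{A}^\pi\beta(x)$.
   Context: Consider the controlled Itô SDE $dX_t=f(X_t,u_t)\,dt+\sigma(X_t,u_t)\,dW_t$ with state $X_t\in\mathbb{R}^{n_x}$, input $u_t\in U\subseteq\mathbb{R}^{n_u}$, locally Lipschitz $f:\mathbb{R}^{n_x}\times\mathbb{R}^{n_u}\to\mathbb{R}^{n_x}$ and $\sigma:\mathbb{R}^{n_x}\times\mathbb{R}^{n_u}\to\mathbb{R}^{n_x\times n_w}$, and $W_t$ a standard $n_w$-dimensional Brownian motion. The safe set $C\subsetneq\mathbb{R}^{n_x}$ is a compact regular set with nonempty connected interior and piecewise smooth boundary. Standing assumption: for every $x\in C$ and every input $u$, the matrix $\sigma(x,u)$ has full row rank. A time-invariant Lipschitz continuous feedback policy $\pi$ with values in $U$ is fixed and $u_t=\pi(X_t)$; $X_t$ denotes the (un-killed) closed-loop process (the paper implicitly takes $\pi$ defined wherever the process evolves, so that this process is well defined). The killed process uses a coffin state $K\notin\mathbb{R}^{n_x}$: $X_t^\dagger=X_t$ if $X_s\in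 C$ for all $s\in[0,t]$, and $X_t^\dagger=K$ otherwise. For $t\ge0$ and a measurable $\beta$ with $\beta=0$ outside $C$ (convention $\beta(K)=0$), $T_t^\pi\beta(x)=\mathbb{E}^\pi[\beta(X_t^\dagger)\mid X_0=x]$ for $x\in C$ and $T_t^\pi\beta(x)=0$ for $x\notin C$. $\mathbb{E}^\pi$ denotes expectation for the closed-loop system under $\pi$. *)

theory Defs
  imports "HOL-Analysis.Analysis" "HOL-Probability.Probability"
begin

definition loc_lipschitz :: "('a::metric_space \<Rightarrow> 'b::metric_space) \<Rightarrow> bool" where
  "loc_lipschitz F \<longleftrightarrow>
     (\<forall>z. \<exists>e>0. \<exists>L. \<forall>a\<in>ball z e. \<forall>b\<in>ball z e. dist (F a) (F b) \<le> L * dist a b)"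

definition test_fun ::
  "(real^'n \<Rightarrow> real) \<Rightarrow> (real^'n \<Rightarrow> real^'n) \<Rightarrow> (real^'n \<Rightarrow> real^'n^'n) \<Rightarrow> bool" where
  "test_fun \<phi> D H \<longleftrightarrow>
     (\<forall>y. (\<phi> has_derivative (\<lambda>h. D y \<bullet> h)) (at y)) \<and>
     (\<forall>y. (D has_derivative (\<lambda>h. H y *v h)) (at y)) \<and>
     continuous_on UNIV H \<and>
     compact (closure {y. \<phi> y \<noteq> 0})"

definition cl_generator ::
  "((real^'n) \<times> (real^'m) \<Rightarrow> real^'n) \<Rightarrow> ((real^'n) \<times> (real^'m) \<Rightarrow> real^'w^'n) \<Rightarrow>
   (real^'n \<Rightarrow> real^'m) \<Rightarrow> (real^'n \<Rightarrow> real^'n) \<Rightarrow> (real^'n \<Rightarrow> real^'n^'n) \<Rightarrow> real^'n \<Rightarrow> real" where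
  "cl_generator f \<sigma> \<pi> D H y =
     f (y, \<pi> y) \<bullet> D y
     + 1/2 * trace ((\<sigma> (y, \<pi> y) ** transpose (\<sigma> (y, \<pi> y))) ** H y)"

definition nat_filt :: "'a measure \<Rightarrow> (real \<Rightarrow> 'a \<Rightarrow> real^'n) \<Rightarrow> real \<Rightarrow> 'a set set" where
  "nat_filt M X s = sigma_sets (space M)
     (\<Union>r\<in>{0..s}. {X r -` B \<inter> space M | B. B \<in> sets borel})"

(* X is a (weak) solution of the closed-loop SDE dX = f(X,pi X)dt + sigma(X,pi X)dW
   started at x, in the sense of the Stroock--Varadhan martingale problem:
   continuous paths, X_0 = x, and for every C^2 compactly supported phi,
   phi(X_t) - phi(X_0) - int_0^t L phi(X_s) ds is a martingale w.r.t. the natural filtration. *)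
definition cl_solution ::
  "'a measure \<Rightarrow> (real \<Rightarrow> 'a \<Rightarrow> real^'n) \<Rightarrow> ((real^'n) \<times> (real^'m) \<Rightarrow> real^'n) \<Rightarrow>
   ((real^'n) \<times> (real^'m) \<Rightarrow> real^'w^'n) \<Rightarrow> (real^'n \<Rightarrow> real^'m) \<Rightarrow> real^'n \<Rightarrow> bool" where
  "cl_solution M X f \<sigma> \<pi> x \<longleftrightarrow>
     prob_space M \<and>
     (\<forall>t\<ge>0. X t \<in> borel_measurable M) \<and>
     (\<forall>\<omega>\<in>space M. X 0 \<omega> = x \<and> continuous_on {0..} (\<lambda>t. X t \<omega>)) \<and>
     (\<forall>\<phi> D H. test_fun \<phi> D H \<longrightarrow>
        (let Mt = (\<lambda>t \<omega>. \<phi> (X t \<omega>) - \<phi> (X 0 \<omega>)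
                      - integral {0..t} (\<lambda>s. cl_generator f \<sigma> \<pi> D H (X s \<omega>)))
         in \<forall>s t. 0 \<le> s \<longrightarrow> s \<le> t \<longrightarrow>
              integrable M (Mt t) \<and>
              (\<forall>A\<in>nat_filt M X s. (LINT \<omega>:A|M. Mt t \<omega>) = (LINT \<omega>:A|M. Mt s \<omega>))))"

(* Killed semigroup T_t beta(x) = E[beta(X_t^dagger) | X_0 = x], beta(K) = 0;
   the path must stay in C on [0,t] (including time 0, so the value is 0 if x \<notin> C). *)
definition killed_sg :: "'a measure \<Rightarrow> (real \<Rightarrow> 'a \<Rightarrow> real^'n) \<Rightarrow> (real^'n) set \<Rightarrow>
    (real^'n \<Rightarrow> real) \<Rightarrow> real \<Rightarrow> real" where
  "killed_sg M X C \<beta> t =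
     (LINT \<omega>|M. (if (\<forall>s\<in>{0..t}. X s \<omega> \<in> C) then \<beta> (X t \<omega>) else 0))"

end

theory Submission
  imports Defs
begin

(*
  Killed and unkilled process differ only on the event that the path has left C by time t,
  so the two difference quotients differ by at most sup |beta| * P(exit C by t) / t, and it
  suffices to show that the exit probability is o(t).  Choose r with cball x r inside C and a
  C^2 radial bump phi with compact support that vanishes on the ball of radius r/2 around x and
  is large on the sphere of radius r.  Since L phi vanishes near x, the Dynkin martingale
  phi(X_t) - int_0^t L phi(X_s) ds has no drift until the path leaves the inner ball.  Optional
  stopping at the first time on a dyadic grid where phi(X) reaches a level c, followed by a limit
  along finer grids, bounds the probability that phi(X) exceeds c before t (and hence the exit
  probability) by a constant times t * P(leave the inner ball by t); the last factor tends to 0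
  by path continuity.
*)

section \<open>A radial bump test function\<close>

definition pos_pow :: "nat \<Rightarrow> real \<Rightarrow> real" where
  "pos_pow n v = (max 0 v) ^ n"

lemma pos_pow_nonneg: "0 \<le> pos_pow n v"
  by (simp add: pos_pow_def)

lemma pos_pow_eq_0: "v \<le> 0 \<Longrightarrow> 0 < n \<Longrightarrow> pos_pow n v = 0"
  by (simp add: pos_pow_def max_def)

lemma continuous_on_pos_pow [continuous_intros]:
  "continuous_on S g \<Longrightarrow> continuous_on S (\<lambda>y. pos_pow n (g y))"
  unfolding pos_pow_def by (intro continuous_intros)

lemma has_real_derivative_pos_pow:
  assumes "2 \<le> n"
  shows "(pos_pow n has_real_derivative real n * pos_pow (n - 1) v) (at v)"
proof -
  consider "v < 0" | "v = 0" | "0 < v" by linarith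
  then show ?thesis
  proof cases
    case 1
    have "\<forall>\<^sub>F u in nhds v. pos_pow n u = 0"
      using eventually_nhds_in_open[of "{..<0}" v] 1 assms
      by (auto elim!: eventually_mono simp: pos_pow_eq_0)
    then show ?thesis
      using 1 assms by (subst DERIV_cong_ev[OF refl _ refl]) (auto simp: pos_pow_eq_0)
  next
    case 2
    \<comment> \<open>Caratheodory: at 0 the difference quotient is the continuous function pos_pow (n - 1)\<close>
    have "pos_pow n z - pos_pow n 0 = pos_pow (n - 1) z * (z - 0)" for z
      using assms by (cases "z \<le> 0") (auto simp: pos_pow_def max_def power_eq_if)
    moreover have "isCont (pos_pow (n - 1)) 0"
      using continuous_on_pos_pow[OF continuous_on_id, of UNIV]
      by (simp add: continuous_on_eq_continuous_at)
    ultimately show ?thesis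
      unfolding CARAT_DERIV using 2 assms by (auto simp: pos_pow_eq_0)
  next
    case 3
    have "\<forall>\<^sub>F u in nhds v. pos_pow n u = u ^ n"
      using eventually_nhds_in_open[of "{0<..}" v] 3
      by (auto elim!: eventually_mono simp: pos_pow_def)
    then show ?thesis
      using 3 by (subst DERIV_cong_ev[OF refl _ refl]) (auto intro!: derivative_eq_intros simp: pos_pow_def)
  qed
qed

lemma has_real_derivative_pos_pow_comp [derivative_intros]:
  assumes "(g has_real_derivative g') (at s)" and "2 \<le> n"
  shows "((\<lambda>s. pos_pow n (g s)) has_real_derivative real n * pos_pow (n - 1) (g s) * g') (at s)"
  using DERIV_chain'[OF assms(1) has_real_derivative_pos_pow[OF assms(2)]] by (simp add: mult.assoc)

definition bump_profile :: "real \<Rightarrow> real \<Rightarrow> real \<Rightarrow> real" where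
  "bump_profile m w s = pos_pow 3 (w\<^sup>2 - (s - m)\<^sup>2)"

definition bump_profile_deriv :: "real \<Rightarrow> real \<Rightarrow> real \<Rightarrow> real" where
  "bump_profile_deriv m w s = - 6 * (s - m) * pos_pow 2 (w\<^sup>2 - (s - m)\<^sup>2)"

definition bump_profile_deriv2 :: "real \<Rightarrow> real \<Rightarrow> real \<Rightarrow> real" where
  "bump_profile_deriv2 m w s =
     24 * (s - m)\<^sup>2 * pos_pow 1 (w\<^sup>2 - (s - m)\<^sup>2) - 6 * pos_pow 2 (w\<^sup>2 - (s - m)\<^sup>2)"

lemma has_real_derivative_bump_profile:
  "(bump_profile m w has_real_derivative bump_profile_deriv m w s) (at s)"
  unfolding bump_profile_def[abs_def] bump_profile_deriv_def
  by (auto intro!: derivative_eq_intros simp: algebra_simps)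

lemma has_real_derivative_bump_profile_deriv:
  "(bump_profile_deriv m w has_real_derivative bump_profile_deriv2 m w s) (at s)"
  unfolding bump_profile_deriv_def[abs_def] bump_profile_deriv2_def
  by (auto intro!: derivative_eq_intros simp: algebra_simps power2_eq_square)

lemma bump_profile_eq_0:
  assumes "w\<^sup>2 \<le> (s - m)\<^sup>2"
  shows "bump_profile m w s = 0" "bump_profile_deriv m w s = 0" "bump_profile_deriv2 m w s = 0"
  using assms by (simp_all add: bump_profile_def bump_profile_deriv_def bump_profile_deriv2_def pos_pow_eq_0)

lemma bump_profile_gap_outside_annulus:
  fixes x y :: "real^'n"
  assumes "0 < r" "dist y x \<le> r / 2 \<or> 2 * r \<le> dist y x"
  shows "(r\<^sup>2 / 2)\<^sup>2 \<le> ((y - x) \<bullet> (y - x) - r\<^sup>2)\<^sup>2"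
proof -
  have q: "(y - x) \<bullet> (y - x) = (dist y x)\<^sup>2"
    by (simp add: dist_norm power2_norm_eq_inner)
  have "r\<^sup>2 / 2 \<le> \<bar>(dist y x)\<^sup>2 - r\<^sup>2\<bar>"
    using assms(2)
  proof
    assume "dist y x \<le> r / 2"
    then have "(dist y x)\<^sup>2 \<le> (r / 2)\<^sup>2"
      by (simp add: power_mono)
    then show ?thesis
      using zero_le_power2[of "dist y x"] by (simp add: power_divide abs_if)
  next
    assume "2 * r \<le> dist y x"
    then have "(2 * r)\<^sup>2 \<le> (dist y x)\<^sup>2"
      using assms(1) by (intro power_mono) auto
    then show ?thesis
      using zero_le_power2[of r] by (simp add: power_mult_distrib abs_if)
  qed
  then show ?thesis
    using assms(1) by (simp add: q abs_le_square_iff[symmetric])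
qed

definition radial_grad :: "(real \<Rightarrow> real) \<Rightarrow> real^'n \<Rightarrow> real^'n \<Rightarrow> real^'n" where
  "radial_grad h' x y = (2 * h' ((y - x) \<bullet> (y - x))) *\<^sub>R (y - x)"

definition radial_hess :: "(real \<Rightarrow> real) \<Rightarrow> (real \<Rightarrow> real) \<Rightarrow> real^'n \<Rightarrow> real^'n \<Rightarrow> real^'n^'n" where
  "radial_hess h' h'' x y =
     (\<chi> i j. 4 * h'' ((y - x) \<bullet> (y - x)) * (y - x) $ i * (y - x) $ j
             + (if i = j then 2 * h' ((y - x) \<bullet> (y - x)) else 0))"

lemma matrix_vector_mult_rank_one_plus_diag:
  fixes v h :: "real^'n"
  shows "(\<chi> i j. a * v $ i * v $ j + (if i = j then b else 0)) *v h = (a * (v \<bullet> h)) *\<^sub>R v + b *\<^sub>R h"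
proof -
  have "(\<Sum>j\<in>UNIV. (a * v $ i * v $ j + (if i = j then b else 0)) * h $ j) = a * (v \<bullet> h) * v $ i + b * h $ i" for i
  proof -
    have "(\<Sum>j\<in>UNIV. (a * v $ i * v $ j + (if i = j then b else 0)) * h $ j)
        = (\<Sum>j\<in>UNIV. (a * v $ i) * (v $ j * h $ j)) + (\<Sum>j\<in>UNIV. if i = j then b * h $ j else 0)"
      by (subst sum.distrib[symmetric]) (rule sum.cong, auto simp: algebra_simps)
    then show ?thesis
      by (simp add: sum_distrib_left[symmetric] inner_vec_def)
  qed
  then show ?thesis by (simp add: vec_eq_iff matrix_vector_mult_def)
qed

lemma test_fun_radial:
  fixes x :: "real^'n"
  assumes h: "\<And>s. (h has_real_derivative h' s) (at s)"
    and h': "\<And>s. (h' has_real_derivative h'' s) (at s)"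
    and h''_cont: "continuous_on UNIV h''"
    and h_supp: "\<And>s. R \<le> s \<Longrightarrow> h s = 0"
  shows "test_fun (\<lambda>y. h ((y - x) \<bullet> (y - x))) (radial_grad h' x) (radial_hess h' h'' x)"
  unfolding test_fun_def
proof (intro conjI allI)
  fix y :: "real^'n"
  show "((\<lambda>y. h ((y - x) \<bullet> (y - x))) has_derivative (\<lambda>v. radial_grad h' x y \<bullet> v)) (at y)"
    unfolding radial_grad_def
    by (rule has_derivative_eq_rhs[OF has_derivative_compose[OF _ h[unfolded has_field_derivative_def]]])
      (auto intro!: derivative_eq_intros simp: inner_commute algebra_simps)
  have "((\<lambda>y. h' ((y - x) \<bullet> (y - x))) has_derivative
      (\<lambda>v. h'' ((y - x) \<bullet> (y - x)) * (2 * ((y - x) \<bullet> v)))) (at y)"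
    by (rule has_derivative_compose[OF _ h'[unfolded has_field_derivative_def]])
      (auto intro!: derivative_eq_intros simp: inner_commute)
  then show "(radial_grad h' x has_derivative (*v) (radial_hess h' h'' x y)) (at y)"
    unfolding radial_grad_def[abs_def] radial_hess_def matrix_vector_mult_rank_one_plus_diag
    by (auto intro!: derivative_eq_intros simp: algebra_simps)
next
  have h'_cont: "continuous_on UNIV h'"
    using h' by (meson DERIV_isCont continuous_at_imp_continuous_on)
  show "continuous_on UNIV (radial_hess h' h'' x)"
    unfolding radial_hess_def
  proof (intro continuous_on_vec_lambda)
    fix i j :: 'n
    show "continuous_on UNIV (\<lambda>y. 4 * h'' ((y - x) \<bullet> (y - x)) * (y - x) $ i * (y - x) $ j
             + (if i = j then 2 * h' ((y - x) \<bullet> (y - x)) else 0))"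
      by (cases "i = j") (auto intro!: continuous_intros continuous_on_compose2[OF h''_cont]
          continuous_on_compose2[OF h'_cont])
  qed
next
  have "{y. h ((y - x) \<bullet> (y - x)) \<noteq> 0} \<subseteq> cball x (sqrt R)"
  proof
    fix y assume "y \<in> {y. h ((y - x) \<bullet> (y - x)) \<noteq> 0}"
    then have "(y - x) \<bullet> (y - x) < R"
      using h_supp by (meson mem_Collect_eq not_le)
    then have "(dist x y)\<^sup>2 < R"
      by (simp add: dist_norm power2_norm_eq_inner inner_diff_left inner_diff_right inner_commute)
    then show "y \<in> cball x (sqrt R)"
      by (simp add: real_less_rsqrt less_imp_le)
  qed
  then show "compact (closure {y. h ((y - x) \<bullet> (y - x)) \<noteq> 0})"
    by (meson bounded_cball bounded_subset compact_closure)
qed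

lemma test_fun_continuous_on:
  assumes "test_fun \<phi> D H"
  shows "continuous_on UNIV \<phi>" "continuous_on UNIV D"
  using assms unfolding test_fun_def
  by (meson continuous_at_imp_continuous_on has_derivative_continuous)+

lemma loc_lipschitz_imp_continuous_on:
  assumes "loc_lipschitz F"
  shows "continuous_on UNIV F"
proof -
  have "isCont F z" for z
  proof -
    obtain e L where e: "0 < e" and L: "\<forall>a\<in>ball z e. \<forall>b\<in>ball z e. dist (F a) (F b) \<le> L * dist a b"
      using assms unfolding loc_lipschitz_def by blast
    have "(max L 0)-lipschitz_on (ball z e) F"
      unfolding lipschitz_on_def using L
      by (auto intro: order_trans[OF _ mult_right_mono[OF max.cobounded1 zero_le_dist]])
    then have "continuous_on (ball z e) F"
      by (rule lipschitz_on_continuous_on)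
    then show ?thesis
      using e by (auto intro: continuous_on_interior)
  qed
  then show ?thesis
    by (simp add: continuous_at_imp_continuous_on)
qed

lemma continuous_on_cl_generator:
  fixes f :: "(real^'n) \<times> (real^'m) \<Rightarrow> real^'n"
    and \<sigma> :: "(real^'n) \<times> (real^'m) \<Rightarrow> real^'w^'n"
  assumes "continuous_on UNIV f" "continuous_on UNIV \<sigma>" "continuous_on UNIV \<pi>"
    and "continuous_on UNIV D" "continuous_on UNIV H"
  shows "continuous_on UNIV (cl_generator f \<sigma> \<pi> D H)"
proof -
  have "continuous_on UNIV (\<lambda>y. f (y, \<pi> y))" "continuous_on UNIV (\<lambda>y. \<sigma> (y, \<pi> y))"
    by (auto intro!: continuous_on_compose2[OF assms(1)] continuous_on_compose2[OF assms(2)]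
        continuous_intros assms(3))
  then show ?thesis
    unfolding cl_generator_def[abs_def] trace_def matrix_matrix_mult_def transpose_def
    by (simp, intro continuous_intros assms(4,5)) auto
qed

lemma cl_generator_eq_0: "D y = 0 \<Longrightarrow> H y = 0 \<Longrightarrow> cl_generator f \<sigma> \<pi> D H y = 0"
  by (simp add: cl_generator_def trace_def matrix_matrix_mult_def)

lemma bounded_range_if_compact_support:
  assumes "continuous_on UNIV g" "compact S" "\<And>y. y \<notin> S \<Longrightarrow> g y = 0"
  shows "bounded (range g)"
proof -
  have "range g \<subseteq> insert 0 (g ` S)"
    using assms(3) by blast
  moreover have "bounded (g ` S)"
    using assms(1,2) by (meson compact_continuous_image compact_imp_bounded continuous_on_subset subset_UNIV)
  ultimately show ?thesis
    by (meson bounded_insert bounded_subset)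
qed

section \<open>Hitting events of processes with continuous paths\<close>

definition hitting_event :: "'a measure \<Rightarrow> (real \<Rightarrow> 'a \<Rightarrow> 'b) \<Rightarrow> 'b set \<Rightarrow> real \<Rightarrow> 'a set" where
  "hitting_event M X S t = {\<omega> \<in> space M. \<exists>s\<in>{0..t}. X s \<omega> \<in> S}"

lemma hitting_event_mono: "S \<subseteq> S' \<Longrightarrow> t \<le> t' \<Longrightarrow> hitting_event M X S t \<subseteq> hitting_event M X S' t'"
  by (fastforce simp: hitting_event_def)

definition first_occurrence :: "(nat \<Rightarrow> 'a \<Rightarrow> bool) \<Rightarrow> 'a set \<Rightarrow> nat \<Rightarrow> 'a set" where
  "first_occurrence P S k = {\<omega> \<in> S. P k \<omega> \<and> (\<forall>j<k. \<not> P j \<omega>)}"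

lemma disjoint_family_first_occurrence: "disjoint_family (first_occurrence P S)"
  unfolding disjoint_family_on_def first_occurrence_def by (auto dest: not_less_iff_gr_or_eq[THEN iffD1])

lemma Collect_ex_le_eq_UN_first_occurrence:
  "{\<omega> \<in> S. \<exists>k\<le>N. P k \<omega>} = (\<Union>k\<le>N. first_occurrence P S k)"
proof (intro equalityI subsetI)
  fix \<omega> assume "\<omega> \<in> {\<omega> \<in> S. \<exists>k\<le>N. P k \<omega>}"
  then obtain k where "\<omega> \<in> S" "k \<le> N" "P k \<omega>"
    by blast
  then have "\<omega> \<in> first_occurrence P S (LEAST k. P k \<omega>)" "(LEAST k. P k \<omega>) \<le> N"
    by (auto simp: first_occurrence_def intro: LeastI dest: not_less_Least Least_le)
  then show "\<omega> \<in> (\<Union>k\<le>N. first_occurrence P S k)"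
    by blast
qed (auto simp: first_occurrence_def)

lemma dyadic_point_in_interval:
  assumes "k \<le> 2 ^ n" "0 \<le> t"
  shows "real k * t / 2 ^ n \<in> {0..t}"
proof -
  have "real k \<le> 2 ^ n"
    using assms(1) by (metis of_nat_le_iff of_nat_numeral of_nat_power)
  then show ?thesis
    using assms(2) by (simp add: field_simps mult_left_mono)
qed

lemma dyadic_point_near:
  fixes s t :: real
  assumes t: "0 < t" and s: "s \<in> {0..t}"
  shows "\<exists>k\<le>2 ^ n. real k * t / 2 ^ n \<le> s \<and> s - real k * t / 2 ^ n < t / 2 ^ n"
proof -
  define k where "k = nat \<lfloor>s * 2 ^ n / t\<rfloor>"
  have "0 \<le> s * 2 ^ n / t" "s * 2 ^ n / t \<le> 2 ^ n"
    using t s by (auto simp: divide_le_eq)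
  then have k: "real k \<le> s * 2 ^ n / t" "s * 2 ^ n / t < real k + 1" "real k \<le> 2 ^ n"
    unfolding k_def by linarith+
  have "real k * t / 2 ^ n \<le> s"
    using k(1) t by (simp add: field_simps)
  moreover have "s * 2 ^ n - real k * t < t"
    using k(2) t by (simp add: field_simps)
  then have "(s * 2 ^ n - real k * t) / 2 ^ n < t / 2 ^ n"
    by (rule divide_strict_right_mono) simp
  then have "s - real k * t / 2 ^ n < t / 2 ^ n"
    by (simp add: diff_divide_distrib)
  moreover have "k \<le> 2 ^ n"
    using k(3) by (metis of_nat_le_iff of_nat_numeral of_nat_power)
  ultimately show ?thesis
    by blast
qed

definition dyadic_hitting_event :: "'a measure \<Rightarrow> (real \<Rightarrow> 'a \<Rightarrow> 'b) \<Rightarrow> 'b set \<Rightarrow> real \<Rightarrow> nat \<Rightarrow> 'a set" where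
  "dyadic_hitting_event M X S t n = {\<omega> \<in> space M. \<exists>k\<le>2 ^ n. X (real k * t / 2 ^ n) \<omega> \<in> S}"

lemma incseq_dyadic_hitting_event: "incseq (dyadic_hitting_event M X S t)"
proof (intro incseq_SucI subsetI)
  fix n \<omega> assume "\<omega> \<in> dyadic_hitting_event M X S t n"
  then obtain k where "\<omega> \<in> space M" "k \<le> 2 ^ n" "X (real k * t / 2 ^ n) \<omega> \<in> S"
    by (auto simp: dyadic_hitting_event_def)
  moreover have "real (2 * k) * t / 2 ^ Suc n = real k * t / 2 ^ n"
    by simp
  ultimately show "\<omega> \<in> dyadic_hitting_event M X S t (Suc n)"
    unfolding dyadic_hitting_event_def by (metis (mono_tags, lifting) mem_Collect_eq mult_le_mono2 power_Suc)
qed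

locale continuous_process = prob_space M for M :: "'a measure" +
  fixes X :: "real \<Rightarrow> 'a \<Rightarrow> real^'n" and x :: "real^'n"
  assumes measurable_X: "\<And>t. 0 \<le> t \<Longrightarrow> X t \<in> borel_measurable M"
    and X_0: "\<And>\<omega>. \<omega> \<in> space M \<Longrightarrow> X 0 \<omega> = x"
    and continuous_paths: "\<And>\<omega>. \<omega> \<in> space M \<Longrightarrow> continuous_on {0..} (\<lambda>t. X t \<omega>)"

lemma cl_solution_continuous_process: "cl_solution M X f \<sigma> \<pi> x \<Longrightarrow> continuous_process M X x"
  unfolding cl_solution_def continuous_process_def continuous_process_axioms_def by blast

context continuous_process
begin

lemma continuous_on_path: "\<omega> \<in> space M \<Longrightarrow> continuous_on {0..t} (\<lambda>s. X s \<omega>)"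
  by (rule continuous_on_subset[OF continuous_paths]) auto

lemma vimage_X_sets: "0 \<le> t \<Longrightarrow> B \<in> sets borel \<Longrightarrow> X t -` B \<inter> space M \<in> sets M"
  using measurable_X measurable_sets by blast

lemma hitting_event_eq_rational_Union:
  assumes "open S" "0 \<le> t"
  shows "hitting_event M X S t = (\<Union>s\<in>insert t ({0..t} \<inter> \<rat>). X s -` S \<inter> space M)"
proof (intro equalityI subsetI)
  fix \<omega> assume "\<omega> \<in> hitting_event M X S t"
  then obtain s where \<omega>: "\<omega> \<in> space M" and s: "s \<in> {0..t}" "X s \<omega> \<in> S"
    by (auto simp: hitting_event_def)
  \<comment> \<open>by path continuity the open set is also visited at rational times just after s\<close>
  obtain e where e: "0 < e" "ball (X s \<omega>) e \<subseteq> S"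
    using assms(1) s(2) open_contains_ball by blast
  obtain d where d: "0 < d" "\<forall>u\<in>{0..t}. dist u s < d \<longrightarrow> dist (X u \<omega>) (X s \<omega>) < e"
    using continuous_on_path[OF \<omega>, of t] s e(1) unfolding continuous_on_iff by blast
  show "\<omega> \<in> (\<Union>s\<in>insert t ({0..t} \<inter> \<rat>). X s -` S \<inter> space M)"
  proof (cases "s = t")
    case False
    then obtain q where q: "q \<in> \<rat>" "s < q" "q < min t (s + d)"
      using s d Rats_dense_in_real[of s "min t (s + d)"] by auto
    then show ?thesis
      using s d e \<omega> by (auto simp: dist_real_def dist_commute intro!: bexI[of _ q])
  qed (use s \<omega> in auto)
qed (use assms in \<open>auto simp: hitting_event_def\<close>)

lemma hitting_event_sets: "open S \<Longrightarrow> 0 \<le> t \<Longrightarrow> hitting_event M X S t \<in> sets M"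
  unfolding hitting_event_eq_rational_Union
  by (intro sets.countable_UN') (auto intro!: vimage_X_sets countable_rat)

lemma nat_filt_subset_sets: "0 \<le> s \<Longrightarrow> nat_filt M X s \<subseteq> sets M"
  unfolding nat_filt_def by (intro sets.sigma_sets_subset) (auto intro: vimage_X_sets)

lemma vimage_X_in_nat_filt: "r \<in> {0..s} \<Longrightarrow> B \<in> sets borel \<Longrightarrow> X r -` B \<inter> space M \<in> nat_filt M X s"
  unfolding nat_filt_def by (rule sigma_sets.Basic) blast

lemma sigma_algebra_nat_filt: "sigma_algebra (space M) (nat_filt M X s)"
  unfolding nat_filt_def by (rule sigma_algebra_sigma_sets) auto

lemma first_occurrence_in_nat_filt:
  assumes "\<And>j. j \<le> k \<Longrightarrow> \<tau> j \<in> {0..\<tau> k}" "B \<in> sets borel"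
  shows "first_occurrence (\<lambda>j \<omega>. X (\<tau> j) \<omega> \<in> B) (space M) k \<in> nat_filt M X (\<tau> k)"
proof -
  interpret F: sigma_algebra "space M" "nat_filt M X (\<tau> k)"
    by (rule sigma_algebra_nat_filt)
  have "first_occurrence (\<lambda>j \<omega>. X (\<tau> j) \<omega> \<in> B) (space M) k
      = (X (\<tau> k) -` B \<inter> space M) - (\<Union>j<k. X (\<tau> j) -` B \<inter> space M)"
    by (auto simp: first_occurrence_def)
  also have "\<dots> \<in> nat_filt M X (\<tau> k)"
    using assms by (intro F.Diff F.finite_UN vimage_X_in_nat_filt) auto
  finally show ?thesis .
qed

lemma dyadic_hitting_event_sets: "B \<in> sets borel \<Longrightarrow> 0 \<le> t \<Longrightarrow> dyadic_hitting_event M X B t n \<in> sets M"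
proof -
  assume "B \<in> sets borel" "0 \<le> t"
  have "dyadic_hitting_event M X B t n = (\<Union>k\<le>2 ^ n. X (real k * t / 2 ^ n) -` B \<inter> space M)"
    by (auto simp: dyadic_hitting_event_def)
  also have "\<dots> \<in> sets M"
    using \<open>B \<in> sets borel\<close> \<open>0 \<le> t\<close> dyadic_point_in_interval
    by (intro sets.finite_UN vimage_X_sets) auto
  finally show ?thesis .
qed

lemma hitting_event_subset_UN_dyadic:
  assumes "open S" "0 < t"
  shows "hitting_event M X S t \<subseteq> (\<Union>n. dyadic_hitting_event M X S t n)"
proof
  fix \<omega> assume "\<omega> \<in> hitting_event M X S t"
  then obtain s where \<omega>: "\<omega> \<in> space M" and s: "s \<in> {0..t}" "X s \<omega> \<in> S"
    by (auto simp: hitting_event_def)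
  obtain e where e: "0 < e" "ball (X s \<omega>) e \<subseteq> S"
    using assms(1) s(2) open_contains_ball by blast
  obtain d where d: "0 < d" "\<forall>u\<in>{0..t}. dist u s < d \<longrightarrow> dist (X u \<omega>) (X s \<omega>) < e"
    using continuous_on_path[OF \<omega>, of t] s e(1) unfolding continuous_on_iff by blast
  obtain n where "t / d < 2 ^ n"
    using real_arch_pow[of 2 "t / d"] by auto
  then have "t / 2 ^ n < d"
    using d(1) assms(2) by (simp add: field_simps)
  moreover obtain k where k: "k \<le> 2 ^ n" "real k * t / 2 ^ n \<le> s" "s - real k * t / 2 ^ n < t / 2 ^ n"
    using dyadic_point_near[OF assms(2) s(1)] by blast
  ultimately have "dist (real k * t / 2 ^ n) s < d"
    using k(2,3) by (simp add: dist_real_def abs_if)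
  then have "dist (X (real k * t / 2 ^ n) \<omega>) (X s \<omega>) < e"
    using d(2) dyadic_point_in_interval[OF k(1)] assms(2) by simp
  then have "X (real k * t / 2 ^ n) \<omega> \<in> S"
    using e(2) by (auto simp: dist_commute)
  then show "\<omega> \<in> (\<Union>n. dyadic_hitting_event M X S t n)"
    using \<omega> k(1) by (auto simp: dyadic_hitting_event_def)
qed

lemma measure_hitting_event_tendsto_0:
  assumes "open S" "x \<notin> closure S"
  shows "((\<lambda>t. measure M (hitting_event M X S t)) \<longlongrightarrow> 0) (at_right 0)"
proof (rule tendsto_at_right_sequentially[of 0 1])
  fix T :: "nat \<Rightarrow> real"
  assume T: "\<And>n. 0 < T n" "decseq T" "T \<longlonglongrightarrow> 0"
  have "range (\<lambda>n. hitting_event M X S (T n)) \<subseteq> sets M"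
    using hitting_event_sets[OF assms(1)] T(1) by (auto intro: less_imp_le)
  moreover have "decseq (\<lambda>n. hitting_event M X S (T n))"
    by (intro decseq_SucI hitting_event_mono decseq_SucD[OF T(2)] order_refl)
  ultimately have "(\<lambda>n. measure M (hitting_event M X S (T n))) \<longlonglongrightarrow> measure M (\<Inter>n. hitting_event M X S (T n))"
    by (rule finite_Lim_measure_decseq)
  moreover have "(\<Inter>n. hitting_event M X S (T n)) = {}"
  proof (intro equals0I)
    fix \<omega> assume \<omega>: "\<omega> \<in> (\<Inter>n. hitting_event M X S (T n))"
    then have "\<omega> \<in> space M"
      by (auto simp: hitting_event_def)
    obtain e where e: "0 < e" "ball x e \<inter> S = {}"
      using assms(2) open_contains_ball[of "- closure S"] closure_subset by blast
    obtain d where d: "0 < d" "\<forall>u\<in>{0..}. dist u 0 < d \<longrightarrow> dist (X u \<omega>) x < e"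
      using continuous_paths[OF \<open>\<omega> \<in> space M\<close>] e(1) X_0[OF \<open>\<omega> \<in> space M\<close>]
      unfolding continuous_on_iff by (metis atLeast_iff order_refl)
    obtain n where "T n < d"
      using order_tendstoD(2)[OF T(3) d(1)] by (auto simp: eventually_sequentially)
    moreover have "\<omega> \<in> hitting_event M X S (T n)"
      using \<omega> by blast
    then obtain s where "s \<in> {0..T n}" "X s \<omega> \<in> S"
      by (auto simp: hitting_event_def)
    ultimately have "dist (X s \<omega>) x < e"
      using d(2) by (simp add: dist_real_def)
    then show False
      using e(2) \<open>X s \<omega> \<in> S\<close> by (auto simp: dist_commute)
  qed
  ultimately show "(\<lambda>n. measure M (hitting_event M X S (T n))) \<longlonglongrightarrow> 0"
    by simp
qed simp

lemma hitting_event_compl_subset_sphere: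
  assumes "cball x r \<subseteq> C" "0 \<le> r"
  shows "hitting_event M X (- C) t \<subseteq> hitting_event M X (sphere x r) t"
proof
  fix \<omega> assume "\<omega> \<in> hitting_event M X (- C) t"
  then obtain s where \<omega>: "\<omega> \<in> space M" and s: "s \<in> {0..t}" "X s \<omega> \<notin> C"
    by (auto simp: hitting_event_def)
  have "r \<le> dist x (X s \<omega>)"
    using s(2) assms(1) by (meson mem_cball not_le subsetD less_imp_le)
  moreover have "continuous_on {0..s} (\<lambda>u. dist x (X u \<omega>))"
    by (intro continuous_intros continuous_on_path[OF \<omega>])
  ultimately obtain u where "0 \<le> u" "u \<le> s" "dist x (X u \<omega>) = r"
    using IVT'[of "\<lambda>u. dist x (X u \<omega>)" 0 r s] s(1) assms(2) X_0[OF \<omega>] by auto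
  then show "\<omega> \<in> hitting_event M X (sphere x r) t"
    using \<omega> s(1) by (auto simp: hitting_event_def)
qed

lemma abs_expectation_minus_killed_sg_le:
  assumes "closed C" "\<beta> \<in> borel_measurable borel" "\<And>y. \<bar>\<beta> y\<bar> \<le> B" "0 \<le> t"
  shows "\<bar>(LINT \<omega>|M. \<beta> (X t \<omega>)) - killed_sg M X C \<beta> t\<bar> \<le> B * measure M (hitting_event M X (- C) t)"
proof -
  define E where "E = hitting_event M X (- C) t"
  have B: "0 \<le> B"
    using assms(3)[of 0] by linarith
  have E: "E \<in> sets M"
    unfolding E_def using assms(1,4) by (intro hitting_event_sets) auto
  have \<beta>X: "integrable M (\<lambda>\<omega>. \<beta> (X t \<omega>))"
    using assms(2,3) measurable_compose[OF measurable_X[OF assms(4)] assms(2)]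
    by (intro integrable_const_bound[where B=B]) auto
  have "killed_sg M X C \<beta> t = (LINT \<omega>|M. \<beta> (X t \<omega>) - \<beta> (X t \<omega>) * indicator E \<omega>)"
    unfolding killed_sg_def by (intro Bochner_Integration.integral_cong) (auto simp: E_def hitting_event_def)
  also have "\<dots> = (LINT \<omega>|M. \<beta> (X t \<omega>)) - (LINT \<omega>|M. \<beta> (X t \<omega>) * indicator E \<omega>)"
    using \<beta>X integrable_real_mult_indicator[OF E \<beta>X] by (rule Bochner_Integration.integral_diff)
  finally have "\<bar>(LINT \<omega>|M. \<beta> (X t \<omega>)) - killed_sg M X C \<beta> t\<bar> = norm (LINT \<omega>|M. \<beta> (X t \<omega>) * indicator E \<omega>)"
    by simp
  also have "\<dots> \<le> (LINT \<omega>|M. norm (\<beta> (X t \<omega>) * indicator E \<omega>))"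
    by (rule integral_norm_bound)
  also have "\<dots> \<le> (LINT \<omega>|M. B * indicator E \<omega>)"
  proof (rule integral_mono')
    show "integrable M (\<lambda>\<omega>. B * indicator E \<omega>)"
      using E by (simp add: less_top[symmetric])
  qed (use B assms(3) in \<open>auto simp: indicator_def\<close>)
  also have "\<dots> = B * measure M E"
    using E by simp
  finally show ?thesis
    by (simp add: E_def)
qed

lemma expectation_minus_killed_sg_over_t_tendsto_0:
  assumes "closed C" "\<beta> \<in> borel_measurable borel" "\<And>y. \<bar>\<beta> y\<bar> \<le> B"
    and exit: "((\<lambda>t. measure M (hitting_event M X (- C) t) / t) \<longlongrightarrow> 0) (at_right 0)"
  shows "((\<lambda>t. ((LINT \<omega>|M. \<beta> (X t \<omega>)) - killed_sg M X C \<beta> t) / t) \<longlongrightarrow> 0) (at_right 0)"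
proof (rule Lim_null_comparison)
  show "\<forall>\<^sub>F t in at_right 0. norm (((LINT \<omega>|M. \<beta> (X t \<omega>)) - killed_sg M X C \<beta> t) / t)
      \<le> B * (measure M (hitting_event M X (- C) t) / t)"
    using abs_expectation_minus_killed_sg_le[OF assms(1-3)]
    by (auto simp: eventually_at_right_field abs_divide divide_right_mono intro!: exI[of _ 1])
  show "((\<lambda>t. B * (measure M (hitting_event M X (- C) t) / t)) \<longlongrightarrow> 0) (at_right 0)"
    using tendsto_mult_right_zero[OF exit] .
qed

end

section \<open>A Dynkin bound on the exit probability\<close>

definition dynkin_process ::
  "(real^'n \<Rightarrow> real) \<Rightarrow> (real^'n \<Rightarrow> real) \<Rightarrow> (real \<Rightarrow> 'a \<Rightarrow> real^'n) \<Rightarrow> real \<Rightarrow> 'a \<Rightarrow> real" where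
  "dynkin_process \<phi> G X t \<omega> = \<phi> (X t \<omega>) - \<phi> (X 0 \<omega>) - integral {0..t} (\<lambda>s. G (X s \<omega>))"

definition natural_martingale :: "'a measure \<Rightarrow> (real \<Rightarrow> 'a \<Rightarrow> real^'n) \<Rightarrow> (real \<Rightarrow> 'a \<Rightarrow> real) \<Rightarrow> bool" where
  "natural_martingale M X Y \<longleftrightarrow>
     (\<forall>s t. 0 \<le> s \<longrightarrow> s \<le> t \<longrightarrow> integrable M (Y t) \<and>
        (\<forall>A\<in>nat_filt M X s. (LINT \<omega>:A|M. Y t \<omega>) = (LINT \<omega>:A|M. Y s \<omega>)))"

lemma cl_solution_natural_martingale:
  "cl_solution M X f \<sigma> \<pi> x \<Longrightarrow> test_fun \<phi> D H \<Longrightarrow>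
     natural_martingale M X (dynkin_process \<phi> (cl_generator f \<sigma> \<pi> D H) X)"
  unfolding cl_solution_def natural_martingale_def dynkin_process_def[abs_def] Let_def by blast

lemma abs_integral_le_bound:
  fixes g :: "real \<Rightarrow> real"
  assumes "a \<le> b" "0 \<le> K" "\<And>u. u \<in> {a..b} \<Longrightarrow> \<bar>g u\<bar> \<le> K"
  shows "\<bar>integral {a..b} g\<bar> \<le> K * (b - a)"
proof (cases "g integrable_on {a..b}")
  case True
  have "norm (integral (cbox a b) g) \<le> K * measure lborel (cbox a b)"
    by (rule has_integral_bound[OF assms(2)]) (use True assms(3) in \<open>auto simp: cbox_interval\<close>)
  then show ?thesis
    using assms(1) by simp
qed (use assms in \<open>simp add: not_integrable_integral\<close>)

lemma integrable_imp_set_integrable: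
  fixes f :: "'a \<Rightarrow> 'b::{banach, second_countable_topology}"
  shows "B \<in> sets M \<Longrightarrow> integrable M f \<Longrightarrow> set_integrable M B f"
  unfolding set_integrable_def by (rule integrable_mult_indicator)

locale dynkin_bump = continuous_process +
  fixes \<phi> G :: "real^'n \<Rightarrow> real" and K \<rho> :: real
  assumes continuous_\<phi>: "continuous_on UNIV \<phi>"
    and \<phi>_nonneg: "\<And>y. 0 \<le> \<phi> y"
    and \<phi>_start: "\<phi> x = 0"
    and bounded_\<phi>: "bounded (range \<phi>)"
    and G_bound: "\<And>y. \<bar>G y\<bar> \<le> K"
    and G_eq_0: "\<And>y. dist y x \<le> \<rho> \<Longrightarrow> G y = 0"
    and martingale: "natural_martingale M X (dynkin_process \<phi> G X)"
begin

abbreviation "Y \<equiv> dynkin_process \<phi> G X"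

abbreviation "drift t \<omega> \<equiv> integral {0..t} (\<lambda>s. G (X s \<omega>))"

abbreviation "leaves t \<equiv> hitting_event M X (- cball x \<rho>) t"

lemma K_nonneg: "0 \<le> K"
  using G_bound[of x] by linarith

lemma leaves_sets: "0 \<le> t \<Longrightarrow> leaves t \<in> sets M"
  by (intro hitting_event_sets) auto

lemma Y_eq: "\<omega> \<in> space M \<Longrightarrow> Y t \<omega> = \<phi> (X t \<omega>) - drift t \<omega>"
  by (simp add: dynkin_process_def X_0 \<phi>_start)

lemma integrable_Y: "0 \<le> t \<Longrightarrow> integrable M (Y t)"
  using martingale[unfolded natural_martingale_def, rule_format, of t t] by simp

lemma set_integral_Y: "0 \<le> s \<Longrightarrow> s \<le> t \<Longrightarrow> A \<in> nat_filt M X s \<Longrightarrow> (LINT \<omega>:A|M. Y t \<omega>) = (LINT \<omega>:A|M. Y s \<omega>)"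
  using martingale[unfolded natural_martingale_def, rule_format, of s t] by blast

lemma abs_drift_le:
  assumes "\<omega> \<in> space M" "s \<in> {0..t}"
  shows "\<bar>drift s \<omega>\<bar> \<le> K * t * indicator (leaves t) \<omega>"
proof (cases "\<omega> \<in> leaves t")
  case True
  have "\<bar>drift s \<omega>\<bar> \<le> K * s"
    using abs_integral_le_bound[of 0 s K "\<lambda>u. G (X u \<omega>)"] assms(2) K_nonneg G_bound by simp
  also have "\<dots> \<le> K * t"
    using assms(2) K_nonneg by (simp add: mult_left_mono)
  finally show ?thesis
    using True by simp
next
  case False
  then have "\<forall>u\<in>{0..s}. G (X u \<omega>) = 0"
    using assms G_eq_0 by (auto simp: hitting_event_def dist_commute)
  then have "drift s \<omega> = integral {0..s} (\<lambda>_. 0::real)"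
    by (intro integral_cong) auto
  then show ?thesis
    using False by simp
qed

lemma expectation_Y: "0 \<le> t \<Longrightarrow> (LINT \<omega>|M. Y t \<omega>) = 0"
proof -
  assume "0 \<le> t"
  have "(LINT \<omega>|M. Y t \<omega>) = (LINT \<omega>:space M|M. Y t \<omega>)"
    by (simp add: set_lebesgue_integral_def indicator_def cong: Bochner_Integration.integral_cong)
  also have "\<dots> = (LINT \<omega>:space M|M. Y 0 \<omega>)"
    using \<open>0 \<le> t\<close> by (intro set_integral_Y) (auto simp: nat_filt_def sigma_sets_top)
  also have "\<dots> = 0"
    by (simp add: dynkin_process_def set_lebesgue_integral_def X_0 cong: Bochner_Integration.integral_cong)
  finally show ?thesis .
qed

lemma integrable_\<phi>_X: "0 \<le> t \<Longrightarrow> integrable M (\<lambda>\<omega>. \<phi> (X t \<omega>))"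
proof -
  assume "0 \<le> t"
  obtain B where "\<And>y. \<bar>\<phi> y\<bar> \<le> B"
    using bounded_\<phi> by (auto simp: bounded_iff)
  then show ?thesis
    using measurable_compose[OF measurable_X[OF \<open>0 \<le> t\<close>] borel_measurable_continuous_onI[OF continuous_\<phi>]]
    by (intro integrable_const_bound[where B=B]) auto
qed

lemma integrable_indicator_leaves: "0 \<le> t \<Longrightarrow> integrable M (\<lambda>\<omega>. K * t * indicator (leaves t) \<omega>)"
  using leaves_sets by (simp add: less_top[symmetric])

lemma expectation_\<phi>_X_le: "0 \<le> t \<Longrightarrow> (LINT \<omega>|M. \<phi> (X t \<omega>)) \<le> K * t * measure M (leaves t)"
proof -
  assume t: "0 \<le> t"
  have "(LINT \<omega>|M. \<phi> (X t \<omega>)) = (LINT \<omega>|M. \<phi> (X t \<omega>) - Y t \<omega>)"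
    using Bochner_Integration.integral_diff[OF integrable_\<phi>_X integrable_Y] expectation_Y t by simp
  also have "\<dots> \<le> (LINT \<omega>|M. K * t * indicator (leaves t) \<omega>)"
    using t abs_drift_le[of _ t t, THEN abs_le_D1]
    by (intro integral_mono Bochner_Integration.integrable_diff integrable_\<phi>_X integrable_Y
        integrable_indicator_leaves) (auto simp: Y_eq)
  also have "\<dots> = K * t * measure M (leaves t)"
    using leaves_sets[OF t] by simp
  finally show ?thesis .
qed

lemma set_integral_Y_ge_level:
  assumes "A \<in> nat_filt M X s" "s \<in> {0..t}" "\<And>\<omega>. \<omega> \<in> A \<Longrightarrow> c \<le> \<phi> (X s \<omega>)"
  shows "(LINT \<omega>:A|M. c - K * t * indicator (leaves t) \<omega>) \<le> (LINT \<omega>:A|M. Y t \<omega>)"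
proof -
  have A: "A \<in> sets M"
    using assms(1,2) nat_filt_subset_sets by auto
  have "(LINT \<omega>:A|M. c - K * t * indicator (leaves t) \<omega>) \<le> (LINT \<omega>:A|M. Y s \<omega>)"
  proof (rule set_integral_mono)
    show "set_integrable M A (\<lambda>\<omega>. c - K * t * indicator (leaves t) \<omega>)"
      using A assms(2) integrable_indicator_leaves[of t]
      by (intro integrable_imp_set_integrable Bochner_Integration.integrable_diff) auto
    show "set_integrable M A (Y s)"
      using A assms(2) integrable_Y[of s] by (intro integrable_imp_set_integrable) auto
    fix \<omega> assume "\<omega> \<in> A"
    then show "c - K * t * indicator (leaves t) \<omega> \<le> Y s \<omega>"
      using assms(2,3) abs_drift_le[of \<omega> s t] sets.sets_into_space[OF A] by (force simp: Y_eq)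
  qed
  also have "\<dots> = (LINT \<omega>:A|M. Y t \<omega>)"
    using assms by (intro set_integral_Y[symmetric]) auto
  finally show ?thesis .
qed

lemma set_integral_Y_le:
  assumes "B \<in> sets M" "0 \<le> t"
  shows "(LINT \<omega>:B|M. Y t \<omega>) \<le> 2 * K * t * measure M (leaves t)"
proof -
  have "(LINT \<omega>:B|M. Y t \<omega>) \<le> (LINT \<omega>|M. \<phi> (X t \<omega>) + K * t * indicator (leaves t) \<omega>)"
    unfolding set_lebesgue_integral_def
  proof (rule integral_mono)
    show "integrable M (\<lambda>\<omega>. indicator B \<omega> *\<^sub>R Y t \<omega>)"
      using assms integrable_Y by (intro integrable_mult_indicator) auto
    show "integrable M (\<lambda>\<omega>. \<phi> (X t \<omega>) + K * t * indicator (leaves t) \<omega>)"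
      using assms(2) integrable_\<phi>_X integrable_indicator_leaves by (intro Bochner_Integration.integrable_add)
    fix \<omega> assume "\<omega> \<in> space M"
    then show "indicator B \<omega> *\<^sub>R Y t \<omega> \<le> \<phi> (X t \<omega>) + K * t * indicator (leaves t) \<omega>"
      using abs_drift_le[of \<omega> t t] assms(2) \<phi>_nonneg[of "X t \<omega>"] K_nonneg
      by (auto simp: Y_eq indicator_def)
  qed
  also have "\<dots> = (LINT \<omega>|M. \<phi> (X t \<omega>)) + K * t * measure M (leaves t)"
    using assms(2) leaves_sets[OF assms(2)]
    by (simp add: Bochner_Integration.integral_add[OF integrable_\<phi>_X integrable_indicator_leaves])
  also have "\<dots> \<le> 2 * K * t * measure M (leaves t)"
    using expectation_\<phi>_X_le[OF assms(2)] by simp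
  finally show ?thesis .
qed

\<comment> \<open>Optional stopping at the first grid time where the level c is reached.\<close>
lemma measure_grid_crossing_le:
  fixes \<tau> :: "nat \<Rightarrow> real"
  assumes c: "0 < c" and \<tau>: "\<And>k. k \<le> N \<Longrightarrow> \<tau> k \<in> {0..t}"
    and \<tau>_mono: "\<And>j k. j \<le> k \<Longrightarrow> k \<le> N \<Longrightarrow> \<tau> j \<le> \<tau> k"
  shows "measure M {\<omega> \<in> space M. \<exists>k\<le>N. c < \<phi> (X (\<tau> k) \<omega>)} \<le> 3 * K * t * measure M (leaves t) / c"
proof -
  define A where "A = first_occurrence (\<lambda>k \<omega>. X (\<tau> k) \<omega> \<in> {y. c < \<phi> y}) (space M)"
  define Gs where "Gs = {\<omega> \<in> space M. \<exists>k\<le>N. c < \<phi> (X (\<tau> k) \<omega>)}"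
  define Z where "Z \<omega> = K * t * indicator (leaves t) \<omega>" for \<omega>
  have t: "0 \<le> t"
    using \<tau>[of 0] by auto
  have A_filt: "A k \<in> nat_filt M X (\<tau> k)" if "k \<le> N" for k
    unfolding A_def using that \<tau> \<tau>_mono
    by (intro first_occurrence_in_nat_filt borel_open open_Collect_less continuous_\<phi> continuous_intros) auto
  have A_sets: "A k \<in> sets M" if "k \<le> N" for k
    using A_filt[OF that] nat_filt_subset_sets \<tau>[OF that] by auto
  have Gs_eq: "Gs = (\<Union>k\<le>N. A k)"
    unfolding Gs_def A_def by (simp add: Collect_ex_le_eq_UN_first_occurrence[symmetric])
  have Gs_sets: "Gs \<in> sets M"
    using A_sets by (auto simp: Gs_eq)
  have Z_int: "integrable M Z"
    using integrable_indicator_leaves[OF t] unfolding Z_def .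
  have "disjoint_family_on A {..N}"
    unfolding A_def by (rule disjoint_family_on_mono[OF _ disjoint_family_first_occurrence]) simp
  then have sum_over_A: "(LINT \<omega>:Gs|M. f \<omega>) = (\<Sum>k\<le>N. LINT \<omega>:A k|M. f \<omega>)"
    if "integrable M f" for f :: "'a \<Rightarrow> real"
    unfolding Gs_eq using A_sets that by (intro set_integral_finite_Union integrable_imp_set_integrable) auto
  have "c * measure M Gs - (LINT \<omega>|M. Z \<omega>) = (LINT \<omega>|M. c * indicator Gs \<omega> - Z \<omega>)"
    using Gs_sets Z_int by (simp add: less_top[symmetric])
  also have "\<dots> \<le> (LINT \<omega>:Gs|M. c - Z \<omega>)"
    unfolding set_lebesgue_integral_def
  proof (rule integral_mono)
    show "integrable M (\<lambda>\<omega>. c * indicator Gs \<omega> - Z \<omega>)"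
      using Gs_sets Z_int by (simp add: less_top[symmetric])
    show "integrable M (\<lambda>\<omega>. indicator Gs \<omega> *\<^sub>R (c - Z \<omega>))"
      using Gs_sets Z_int by (intro integrable_mult_indicator) auto
  qed (use K_nonneg t in \<open>auto simp: Z_def indicator_def\<close>)
  also have "\<dots> = (\<Sum>k\<le>N. LINT \<omega>:A k|M. c - Z \<omega>)"
    using Z_int by (intro sum_over_A) auto
  also have "\<dots> \<le> (\<Sum>k\<le>N. LINT \<omega>:A k|M. Y t \<omega>)"
    unfolding Z_def using A_filt \<tau>
    by (intro sum_mono set_integral_Y_ge_level) (auto simp: A_def first_occurrence_def less_imp_le)
  also have "\<dots> = (LINT \<omega>:Gs|M. Y t \<omega>)"
    using integrable_Y[OF t] by (rule sum_over_A[symmetric])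
  also have "\<dots> \<le> 2 * K * t * measure M (leaves t)"
    using Gs_sets t by (rule set_integral_Y_le)
  finally have "c * measure M Gs \<le> 3 * K * t * measure M (leaves t)"
    using leaves_sets[OF t] by (simp add: Z_def)
  then show ?thesis
    using c by (simp add: Gs_def pos_le_divide_eq mult.commute)
qed

lemma measure_crossing_le:
  assumes c: "0 < c" and t: "0 < t"
  shows "measure M (hitting_event M X {y. c < \<phi> y} t) \<le> 3 * K * t * measure M (leaves t) / c"
proof -
  define Gn where "Gn = dyadic_hitting_event M X {y. c < \<phi> y} t"
  have level_set: "open {y. c < \<phi> y}"
    by (intro open_Collect_less continuous_\<phi> continuous_intros)
  have Gn_sets: "Gn n \<in> sets M" for n
    unfolding Gn_def using level_set t by (intro dyadic_hitting_event_sets borel_open) auto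
  have "measure M (Gn n) \<le> 3 * K * t * measure M (leaves t) / c" for n
    unfolding Gn_def dyadic_hitting_event_def mem_Collect_eq using c t
    by (intro measure_grid_crossing_le dyadic_point_in_interval) (auto intro: divide_right_mono mult_right_mono)
  then have "measure M (\<Union>n. Gn n) \<le> 3 * K * t * measure M (leaves t) / c"
    using Gn_sets incseq_dyadic_hitting_event unfolding Gn_def
    by (intro LIMSEQ_le_const2[OF finite_Lim_measure_incseq]) auto
  moreover have "measure M (hitting_event M X {y. c < \<phi> y} t) \<le> measure M (\<Union>n. Gn n)"
    unfolding Gn_def using hitting_event_subset_UN_dyadic[OF level_set t] Gn_sets
    by (intro finite_measure_mono) (auto simp: Gn_def)
  ultimately show ?thesis
    by linarith
qed

lemma exit_probability_over_t_tendsto_0: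
  assumes "0 < \<rho>" "0 \<le> r" "cball x r \<subseteq> C" "0 < c" "\<And>y. dist y x = r \<Longrightarrow> c < \<phi> y"
  shows "((\<lambda>t. measure M (hitting_event M X (- C) t) / t) \<longlongrightarrow> 0) (at_right 0)"
proof (rule tendsto_sandwich[OF _ _ tendsto_const])
  have "((\<lambda>t. 3 * K / c * measure M (leaves t)) \<longlongrightarrow> 3 * K / c * 0) (at_right 0)"
    using assms(1) by (intro tendsto_mult tendsto_const measure_hitting_event_tendsto_0) (auto simp: closure_complement)
  then show "((\<lambda>t. 3 * K / c * measure M (leaves t)) \<longlongrightarrow> 0) (at_right 0)"
    by simp
  have "measure M (hitting_event M X (- C) t) / t \<le> 3 * K / c * measure M (leaves t)" if "0 < t" for t
  proof -
    have "sphere x r \<subseteq> {y. c < \<phi> y}"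
      using assms(5) by (auto simp: dist_commute)
    then have "hitting_event M X (- C) t \<subseteq> hitting_event M X {y. c < \<phi> y} t"
      by (meson hitting_event_compl_subset_sphere[OF assms(3,2)] hitting_event_mono order_refl subset_trans)
    then have "measure M (hitting_event M X (- C) t) \<le> measure M (hitting_event M X {y. c < \<phi> y} t)"
      using that by (intro finite_measure_mono hitting_event_sets open_Collect_less continuous_\<phi> continuous_intros) auto
    also have "\<dots> \<le> 3 * K * t * measure M (leaves t) / c"
      by (rule measure_crossing_le[OF assms(4) that])
    finally show ?thesis
      using that by (simp add: divide_le_eq field_simps)
  qed
  then show "\<forall>\<^sub>F t in at_right 0. measure M (hitting_event M X (- C) t) / t \<le> 3 * K / c * measure M (leaves t)"
    by (auto simp: eventually_at_right_field intro: exI[of _ 1])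
  show "\<forall>\<^sub>F t in at_right 0. 0 \<le> measure M (hitting_event M X (- C) t) / t"
    by (auto simp: eventually_at_right_field intro: exI[of _ 1])
qed

end

lemma cl_solution_dynkin_bump:
  fixes f :: "(real^'n) \<times> (real^'m) \<Rightarrow> real^'n"
    and \<sigma> :: "(real^'n) \<times> (real^'m) \<Rightarrow> real^'w^'n"
  assumes sol: "cl_solution M X f \<sigma> \<pi> x"
    and cont: "continuous_on UNIV f" "continuous_on UNIV \<sigma>" "continuous_on UNIV \<pi>"
    and r: "0 < r"
  shows "\<exists>\<phi> G K. dynkin_bump M X x \<phi> G K (r / 2) \<and> (\<forall>y. dist y x = r \<longrightarrow> \<phi> y = (r\<^sup>2 / 2) ^ 6)"
proof -
  define m w where "m = r\<^sup>2" and "w = r\<^sup>2 / 2"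
  define \<phi> where "\<phi> y = bump_profile m w ((y - x) \<bullet> (y - x))" for y
  define D where "D = radial_grad (bump_profile_deriv m w) x"
  define H where "H = radial_hess (bump_profile_deriv m w) (bump_profile_deriv2 m w) x"
  define G where "G = cl_generator f \<sigma> \<pi> D H"
  have outside: "\<phi> y = 0 \<and> G y = 0" if "dist y x \<le> r / 2 \<or> 2 * r \<le> dist y x" for y
    using bump_profile_eq_0[OF bump_profile_gap_outside_annulus[OF r that]]
    unfolding \<phi>_def G_def m_def w_def
    by (auto intro!: cl_generator_eq_0 simp: D_def H_def m_def w_def radial_grad_def radial_hess_def vec_eq_iff)
  have "test_fun \<phi> D H"
    unfolding \<phi>_def[abs_def] D_def H_def
  proof (rule test_fun_radial[where R = "2 * r\<^sup>2"])
    show "continuous_on UNIV (bump_profile_deriv2 m w)"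
      unfolding bump_profile_deriv2_def[abs_def] by (intro continuous_intros)
    show "bump_profile m w s = 0" if "2 * r\<^sup>2 \<le> s" for s
      using that zero_le_power2[of r]
      by (intro bump_profile_eq_0) (simp add: m_def w_def abs_le_square_iff[symmetric] abs_if)
  qed (rule has_real_derivative_bump_profile has_real_derivative_bump_profile_deriv)+
  note test_fun = this test_fun_continuous_on[OF this]
  have "continuous_on UNIV G"
    unfolding G_def using cont test_fun test_fun_def by (intro continuous_on_cl_generator) auto
  then have "bounded (range G)"
    using outside by (intro bounded_range_if_compact_support[of _ "cball x (2 * r)"]) (auto simp: dist_commute)
  then obtain K where K: "\<And>y. \<bar>G y\<bar> \<le> K"
    by (auto simp: bounded_iff)
  have "dynkin_bump M X x \<phi> G K (r / 2)"
  proof (intro dynkin_bump.intro dynkin_bump_axioms.intro)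
    show "continuous_process M X x"
      using sol by (rule cl_solution_continuous_process)
    show "bounded (range \<phi>)"
      using test_fun outside
      by (intro bounded_range_if_compact_support[of _ "cball x (2 * r)"]) (auto simp: dist_commute)
    show "\<phi> x = 0"
      using outside[of x] r by simp
    show "natural_martingale M X (dynkin_process \<phi> G X)"
      unfolding G_def using sol test_fun(1) by (rule cl_solution_natural_martingale)
  qed (use test_fun K outside r in \<open>auto simp: \<phi>_def bump_profile_def pos_pow_nonneg\<close>)
  moreover have "\<phi> y = (r\<^sup>2 / 2) ^ 6" if "dist y x = r" for y
    using that by (simp add: \<phi>_def bump_profile_def pos_pow_def m_def w_def dist_norm
        power2_norm_eq_inner[symmetric] power_mult[symmetric])
  ultimately show ?thesis
    by blast
qed

lemma cl_solution_exit_probability_over_t_tendsto_0: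
  fixes f :: "(real^'n) \<times> (real^'m) \<Rightarrow> real^'n"
    and \<sigma> :: "(real^'n) \<times> (real^'m) \<Rightarrow> real^'w^'n"
  assumes "cl_solution M X f \<sigma> \<pi> x"
    and "continuous_on UNIV f" "continuous_on UNIV \<sigma>" "continuous_on UNIV \<pi>"
    and "0 < r" "cball x r \<subseteq> C"
  shows "((\<lambda>t. measure M (hitting_event M X (- C) t) / t) \<longlongrightarrow> 0) (at_right 0)"
proof -
  obtain \<phi> G K where bump: "dynkin_bump M X x \<phi> G K (r / 2)"
    and sphere: "\<And>y. dist y x = r \<Longrightarrow> \<phi> y = (r\<^sup>2 / 2) ^ 6"
    using cl_solution_dynkin_bump[OF assms(1-5)] by blast
  show ?thesis
    using assms(5,6) sphere
    by (intro dynkin_bump.exit_probability_over_t_tendsto_0[OF bump, where c = "(r\<^sup>2 / 2) ^ 6 / 2"]) auto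
qed

lemma tendsto_iff_of_diff_tendsto_0:
  fixes f g :: "'a \<Rightarrow> 'b::real_normed_vector"
  assumes "((\<lambda>t. g t - f t) \<longlongrightarrow> 0) F"
  shows "(f \<longlongrightarrow> a) F \<longleftrightarrow> (g \<longlongrightarrow> a) F"
  using Lim_transform[of f a F g] Lim_transform2[of g a F f] assms by blast

theorem theorem5:
  fixes f :: "(real^'n) \<times> (real^'m) \<Rightarrow> real^'n"
    and \<sigma> :: "(real^'n) \<times> (real^'m) \<Rightarrow> real^'w^'n"
    and \<pi> :: "real^'n \<Rightarrow> real^'m"
    and U :: "(real^'m) set"
    and C :: "(real^'n) set"
    and M :: "'a measure"
    and X :: "real \<Rightarrow> 'a \<Rightarrow> real^'n"
    and \<beta> :: "real^'n \<Rightarrow> real"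
    and x :: "real^'n"
  assumes f_lip: "loc_lipschitz f"
    and \<sigma>_lip: "loc_lipschitz \<sigma>"
    and \<pi>_lip: "\<exists>L. L-lipschitz_on UNIV \<pi>"
    and \<pi>_U: "\<forall>y. \<pi> y \<in> U"
    and C_compact: "compact C"
    and C_proper: "C \<noteq> UNIV"
    and C_regular: "closure (interior C) = C"
    and C_int_ne: "interior C \<noteq> {}"
    and C_int_conn: "connected (interior C)"
    and \<sigma>_rank: "\<forall>y\<in>C. \<forall>u\<in>U. rank (\<sigma> (y, u)) = CARD('n)"
    and sol: "cl_solution M X f \<sigma> \<pi> x"
    and x_int: "x \<in> interior C"
    and \<beta>_meas: "\<beta> \<in> borel_measurable borel"
    and \<beta>_bdd: "bounded (range \<beta>)"
    and \<beta>_zero: "\<forall>y. y \<notin> C \<longrightarrow> \<beta> y = 0"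
  shows "((\<exists>a. ((\<lambda>t. (killed_sg M X C \<beta> t - \<beta> x) / t) \<longlongrightarrow> a) (at_right 0)) \<longleftrightarrow>
          (\<exists>a. ((\<lambda>\<tau>. ((LINT \<omega>|M. \<beta> (X \<tau> \<omega>)) - \<beta> x) / \<tau>) \<longlongrightarrow> a) (at_right 0)))
       \<and> (\<forall>a b. ((\<lambda>t. (killed_sg M X C \<beta> t - \<beta> x) / t) \<longlongrightarrow> a) (at_right 0) \<longrightarrow>
                ((\<lambda>\<tau>. ((LINT \<omega>|M. \<beta> (X \<tau> \<omega>)) - \<beta> x) / \<tau>) \<longlongrightarrow> b) (at_right 0) \<longrightarrow>
                a = b)"
proof -
  obtain r where r: "0 < r" "cball x r \<subseteq> C"
    using x_int mem_interior_cball by blast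
  obtain B where B: "\<And>y. \<bar>\<beta> y\<bar> \<le> B"
    using \<beta>_bdd by (auto simp: bounded_iff)
  have "((\<lambda>t. measure M (hitting_event M X (- C) t) / t) \<longlongrightarrow> 0) (at_right 0)"
    using sol loc_lipschitz_imp_continuous_on[OF f_lip] loc_lipschitz_imp_continuous_on[OF \<sigma>_lip]
      \<pi>_lip lipschitz_on_continuous_on r by (intro cl_solution_exit_probability_over_t_tendsto_0) auto
  then have "((\<lambda>t. ((LINT \<omega>|M. \<beta> (X t \<omega>)) - killed_sg M X C \<beta> t) / t) \<longlongrightarrow> 0) (at_right 0)"
    using compact_imp_closed[OF C_compact] \<beta>_meas B
    by (intro continuous_process.expectation_minus_killed_sg_over_t_tendsto_0[OF cl_solution_continuous_process[OF sol]])
  then have "((\<lambda>t. ((LINT \<omega>|M. \<beta> (X t \<omega>)) - \<beta> x) / t - (killed_sg M X C \<beta> t - \<beta> x) / t) \<longlongrightarrow> 0) (at_right 0)"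
    by (simp add: diff_divide_distrib)
  from tendsto_iff_of_diff_tendsto_0[OF this] show ?thesis
    using tendsto_unique[OF trivial_limit_at_right_real] by blast
qed

end
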